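(* Let $n,N\ge1$, and let $H:\mathbb{R}^{2n}\times\mathbb{R}^{2N}\to\mathbb{R}$ be a $C^{1,1}$ function (i.e. $C^1$ with Lipschitz derivative) of the form $H(z,\zeta)=H_0(z)+\kappa\Lambda(z,\zeta)$, $\kappa>0$, such that $\Lambda\ge0$ and $\Lambda(z,\zeta)=0$ iff $\zeta=0$; there are $c_0,c_1,p>0$ with $H(z,\zeta)\ge c_0(|z|^p+\kappa|\zeta|^p)-c_1$; and for all $R>0$ there is $c_2(R)>0$ with $|\frac{\partial\Lambda}{\partial z}(z,\zeta)|\le c_2(R)\Lambda(z,\zeta)$ for $|z|\le R$; the numbers $c_0,c_1,c_2(R),p$ are independent of $\kappa$. Let real initial data $(z^\kappa(0),\zeta^\kappa(0))$ be given for $\kappa\ge\kappa_0$ such that (i) $z^\kappa(0)\to z(0)$ as $\kappa\to+\infty$; (ii) $\kappa\Lambda(z^\kappa(0),\zeta^\kappa(0))\to0$ as $\kappa\to+\infty$; (iii) $\sup_{\kappa\ge\kappa_0}H(z^\kappa(0),\zeta^\kappa(0))=E<\infty$. Then for each $\kappa\ge\kappa_0$ there exist global integral curves $(z^\kappa(t),\zeta^\kappa(t))$ of $H$ with these initial data such that for every $T>0$ \[ \lim_{\kappa\to+\infty}\max_{|t|\le T}\big(|z^\kappa(t)-z(t)|+|\zeta^\kappa(t)|\big)=0, \] where $z(t)$ is the integral curve of the Hamiltonian $H(z,0)=H_0(z)$ on $\mathbb{R}^{2n}$ with initial value $z(0)$; furthermore \[ \lim_{\kappa\to+\infty}\max_{|t|\le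 T}\Big(|H_0(z^\kappa(t))-H_0(z^\kappa(0))|+\kappa\Lambda(z^\kappa(t),\zeta^\kappa(t))\Big)=0. \]
   Context: $|z|,|\zeta|$ are Euclidean norms. The phase spaces carry the standard symplectic structures in Darboux coordinates $z_j=(x_j,y_j)$, $\zeta_j=(\xi_j,\eta_j)$; integral curves are those of the Hamiltonian vector field. *)

theory Defs
  imports "HOL-Analysis.Analysis"
begin

text \<open>Standard symplectic structure in Darboux coordinates: a point of the
  phase space is a pair (x, y); the Hamiltonian vector field of H is
  (dH/dy, -dH/dx), i.e. J applied to the gradient, with J (a, b) = (b, -a).\<close>
definition sympJ :: "('a::real_vector \<times> 'a) \<Rightarrow> 'a \<times> 'a" where
  "sympJ w = (snd w, - fst w)"

definition sympJ2 :: "(('a::real_vector \<times> 'a) \<times> ('b::real_vector \<times> 'b))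
    \<Rightarrow> ('a \<times> 'a) \<times> ('b \<times> 'b)" where
  "sympJ2 w = (sympJ (fst w), sympJ (snd w))"

definition C11 :: "('a::real_inner \<Rightarrow> real) \<Rightarrow> bool" where
  "C11 f \<longleftrightarrow> (\<exists>g L. (\<forall>w. (f has_derivative (\<lambda>h. g w \<bullet> h)) (at w)) \<and>
                       (\<forall>v w. norm (g v - g w) \<le> L * norm (v - w)))"

definition ham_curve :: "('p::real_inner \<Rightarrow> real) \<Rightarrow> ('p \<Rightarrow> 'p) \<Rightarrow> (real \<Rightarrow> 'p) \<Rightarrow> bool" where
  "ham_curve H J \<gamma> \<longleftrightarrow>
     (\<forall>t. \<exists>g. (H has_derivative (\<lambda>h. g \<bullet> h)) (at (\<gamma> t)) \<and>
              (\<gamma> has_vector_derivative J g) (at t))"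

end

theory Submission
  imports Defs
begin

text \<open>Energy is conserved along the flow of \<open>H\<^sub>\<kappa> = H\<^sub>0 + \<kappa> \<Lambda>\<close>, so coercivity bounds
  \<open>|z|\<close> by a constant \<open>R\<close> and \<open>|\<zeta>|\<close> by \<open>O(\<kappa>^(-1/p))\<close>, uniformly in \<open>\<kappa>\<close>. Along the flow
  the penalty \<open>f = \<kappa> \<Lambda>(z, \<zeta>)\<close> has derivative \<open>\<kappa> \<partial>\<^sub>z\<Lambda> \<cdot> J \<nabla>H\<^sub>0(z)\<close>: the
  \<open>\<zeta>\<close>-gradient drops out because \<open>J\<close> is skew. Hence \<open>|f'| \<le> c\<^sub>2(R) M f\<close>, and Gronwall
  gives \<open>f(t) \<le> f(0) exp(K |t|)\<close>, which tends to \<open>0\<close>. The \<open>z\<close>-equation differs from the one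
  of \<open>H\<^sub>0\<close> by \<open>\<kappa> J \<partial>\<^sub>z\<Lambda>\<close>, of size at most \<open>c\<^sub>2(R) f\<close>, so a second Gronwall estimate
  controls \<open>|z\<^sup>\<kappa> - z|\<close>, and energy conservation controls the exchange between \<open>H\<^sub>0\<close> and
  \<open>\<kappa> \<Lambda>\<close>. The flows exist globally because \<open>C\<^sup>1\<^sup>,\<^sup>1\<close> makes the vector fields globally
  Lipschitz (Picard iteration).\<close>

section \<open>Gronwall-type estimates\<close>

lemma has_vector_derivative_reflect:
  assumes "(\<delta> has_vector_derivative \<delta>') (at (- t))"
  shows "((\<lambda>s. \<delta> (- s)) has_vector_derivative - \<delta>') (at t)"
  using vector_diff_chain_at[OF has_vector_derivative_minus[OF has_vector_derivative_id] assms]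
  by (simp add: o_def)

lemma continuous_on_if_has_vector_derivative:
  assumes "\<And>t. (f has_vector_derivative f' t) (at t)"
  shows "continuous_on S f"
  using assms by (meson continuous_at_imp_continuous_on has_vector_derivative_continuous)

lemma norm_le_power_bound_forward:
  fixes \<delta> :: "real \<Rightarrow> 'a::real_normed_vector"
  assumes \<delta>: "\<And>s. (\<delta> has_vector_derivative \<delta>' s) (at s)"
    and "\<delta> 0 = 0" and "0 \<le> t"
    and bound: "\<And>s. 0 < s \<Longrightarrow> s < t \<Longrightarrow> norm (\<delta>' s) \<le> B * s ^ k / fact k"
  shows "norm (\<delta> t) \<le> B * t ^ Suc k / fact (Suc k)"
proof (cases "t = 0")
  case False
  then have "0 < t" using \<open>0 \<le> t\<close> by simp
  have "norm (\<delta> t - \<delta> 0) \<le> B * t ^ Suc k / fact (Suc k) - B * 0 ^ Suc k / fact (Suc k)"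
  proof (rule differentiable_bound_general[OF \<open>0 < t\<close>])
    show "continuous_on {0..t} \<delta>" by (rule continuous_on_if_has_vector_derivative[OF \<delta>])
    show "continuous_on {0..t} (\<lambda>s. B * s ^ Suc k / fact (Suc k))" by (intro continuous_intros) auto
    fix s assume s: "0 < s" "s < t"
    show "(\<delta> has_vector_derivative \<delta>' s) (at s)" by (rule \<delta>)
    have "((\<lambda>s. s ^ Suc k) has_real_derivative Suc k * s ^ k) (at s)"
      using DERIV_pow[of "Suc k" s] by simp
    then have "((\<lambda>s. B * s ^ Suc k / fact (Suc k)) has_real_derivative B * (Suc k * s ^ k) / fact (Suc k)) (at s)"
      by (intro DERIV_cdivide DERIV_cmult)
    then show "((\<lambda>s. B * s ^ Suc k / fact (Suc k)) has_vector_derivative B * s ^ k / fact k) (at s)"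
      by (simp add: has_real_derivative_iff_has_vector_derivative del: of_nat_Suc)
    show "norm (\<delta>' s) \<le> B * s ^ k / fact k" using bound s .
  qed
  then show ?thesis using \<open>\<delta> 0 = 0\<close> by simp
qed (use \<open>\<delta> 0 = 0\<close> in simp)

lemma norm_le_power_bound:
  fixes \<delta> :: "real \<Rightarrow> 'a::real_normed_vector"
  assumes \<delta>: "\<And>s. (\<delta> has_vector_derivative \<delta>' s) (at s)"
    and "\<delta> 0 = 0"
    and bound: "\<And>s. \<bar>s\<bar> \<le> \<bar>t\<bar> \<Longrightarrow> norm (\<delta>' s) \<le> B * \<bar>s\<bar> ^ k / fact k"
  shows "norm (\<delta> t) \<le> B * \<bar>t\<bar> ^ Suc k / fact (Suc k)"
proof (cases "0 \<le> t")
  case True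
  have "norm (\<delta>' s) \<le> B * s ^ k / fact k" if "0 < s" "s < t" for s
    using bound[of s] that True by simp
  then have "norm (\<delta> t) \<le> B * t ^ Suc k / fact (Suc k)"
    by (rule norm_le_power_bound_forward[OF \<delta> \<open>\<delta> 0 = 0\<close> True])
  then show ?thesis using True by simp
next
  case False
  have "norm (\<delta>' (- s)) \<le> B * s ^ k / fact k" if "0 < s" "s < - t" for s
    using bound[of "- s"] that by simp
  then have "norm (\<delta> (- (- t))) \<le> B * (- t) ^ Suc k / fact (Suc k)"
    using has_vector_derivative_reflect[OF \<delta>] \<open>\<delta> 0 = 0\<close> False
    by (intro norm_le_power_bound_forward[where \<delta>' = "\<lambda>s. - \<delta>' (- s)"]) auto
  then show ?thesis using False by simp
qed

lemma norm_below_barrier: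
  fixes \<delta> :: "real \<Rightarrow> 'a::real_normed_vector"
  assumes \<delta>: "\<And>s. (\<delta> has_vector_derivative \<delta>' s) (at s)"
    and \<psi>: "\<And>s. (\<psi> has_real_derivative \<psi>' s) (at s)"
    and start: "norm (\<delta> 0) < \<psi> 0"
    and slope: "\<And>s. 0 < s \<Longrightarrow> s < t \<Longrightarrow> norm (\<delta> s) < \<psi> s \<Longrightarrow> norm (\<delta>' s) \<le> \<psi>' s"
    and "0 \<le> t"
  shows "norm (\<delta> t) < \<psi> t"
proof (rule ccontr)
  assume "\<not> norm (\<delta> t) < \<psi> t"
  define S where "S = {0..t} \<inter> {s. \<psi> s \<le> norm (\<delta> s)}"
  have cont_\<delta>: "continuous_on A \<delta>" and cont_\<psi>: "continuous_on A \<psi>" for A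
    using continuous_on_if_has_vector_derivative \<delta> \<psi>
    by (auto simp: has_real_derivative_iff_has_vector_derivative)
  have "closed S" unfolding S_def
    by (intro closed_Int closed_atLeastAtMost closed_Collect_le cont_\<psi> continuous_on_norm cont_\<delta>)
  moreover have "S \<noteq> {}" using \<open>0 \<le> t\<close> \<open>\<not> norm (\<delta> t) < \<psi> t\<close> by (auto simp: S_def)
  moreover have "bdd_below S" by (rule bdd_belowI[of _ 0]) (auto simp: S_def)
  ultimately have "Inf S \<in> S" by (rule closed_contains_Inf[rotated -1])
  define t1 where "t1 = Inf S"
  have t1: "0 \<le> t1" "t1 \<le> t" "\<psi> t1 \<le> norm (\<delta> t1)"
    using \<open>Inf S \<in> S\<close> by (auto simp: S_def t1_def)
  have below: "norm (\<delta> s) < \<psi> s" if "0 \<le> s" "s < t1" for s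
    using that t1 cInf_lower[OF _ \<open>bdd_below S\<close>, of s] by (force simp: S_def t1_def)
  have "0 < t1" using t1 start by (cases "t1 = 0") auto
  have "norm (\<delta> t1 - \<delta> 0) \<le> \<psi> t1 - \<psi> 0"
  proof (rule differentiable_bound_general[OF \<open>0 < t1\<close> cont_\<delta> cont_\<psi>])
    fix s assume s: "0 < s" "s < t1"
    show "(\<delta> has_vector_derivative \<delta>' s) (at s)" by (rule \<delta>)
    show "(\<psi> has_vector_derivative \<psi>' s) (at s)"
      using \<psi> by (simp add: has_real_derivative_iff_has_vector_derivative)
    show "norm (\<delta>' s) \<le> \<psi>' s" using slope below s t1 by simp
  qed
  then show False using t1 start norm_triangle_ineq2[of "\<delta> t1" "\<delta> 0"] by linarith
qed

lemma gronwall_forward: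
  fixes \<delta> :: "real \<Rightarrow> 'a::real_normed_vector"
  assumes "L > 0" "b \<ge> 0"
    and \<delta>: "\<And>s. (\<delta> has_vector_derivative \<delta>' s) (at s)"
    and growth: "\<And>s. 0 \<le> s \<Longrightarrow> s \<le> t \<Longrightarrow> norm (\<delta>' s) \<le> L * norm (\<delta> s) + b"
    and "0 \<le> t"
  shows "norm (\<delta> t) \<le> (norm (\<delta> 0) + b / L) * exp (L * t)"
proof (rule field_le_epsilon)
  fix e :: real assume "0 < e"
  define \<psi> where "\<psi> s = (norm (\<delta> 0) + e / exp (L * t) + b / L) * exp (L * s) - b / L" for s
  have "norm (\<delta> t) < \<psi> t"
  proof (rule norm_below_barrier[OF \<delta>])
    show "(\<psi> has_real_derivative L * \<psi> s + b) (at s)" for s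
      using \<open>L > 0\<close> unfolding \<psi>_def
      by (auto intro!: derivative_eq_intros simp: field_simps)
    show "norm (\<delta> 0) < \<psi> 0" using \<open>0 < e\<close> by (simp add: \<psi>_def)
    show "norm (\<delta>' s) \<le> L * \<psi> s + b" if "0 < s" "s < t" "norm (\<delta> s) < \<psi> s" for s
      using growth[of s] that \<open>L > 0\<close> mult_strict_left_mono[OF that(3) \<open>L > 0\<close>] by linarith
  qed fact
  also have "\<psi> t \<le> (norm (\<delta> 0) + b / L) * exp (L * t) + e"
    using \<open>L > 0\<close> \<open>b \<ge> 0\<close> by (simp add: \<psi>_def algebra_simps)
  finally show "norm (\<delta> t) \<le> (norm (\<delta> 0) + b / L) * exp (L * t) + e" by simp
qed

lemma gronwall:
  fixes \<delta> :: "real \<Rightarrow> 'a::real_normed_vector"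
  assumes "L > 0" "b \<ge> 0"
    and \<delta>: "\<And>s. (\<delta> has_vector_derivative \<delta>' s) (at s)"
    and growth: "\<And>s. \<bar>s\<bar> \<le> T \<Longrightarrow> norm (\<delta>' s) \<le> L * norm (\<delta> s) + b"
    and "\<bar>t\<bar> \<le> T"
  shows "norm (\<delta> t) \<le> (norm (\<delta> 0) + b / L) * exp (L * T)"
proof -
  have "norm (\<delta> t) \<le> (norm (\<delta> 0) + b / L) * exp (L * \<bar>t\<bar>)"
  proof (cases "0 \<le> t")
    case True
    then show ?thesis
      using gronwall_forward[OF \<open>L > 0\<close> \<open>b \<ge> 0\<close> \<delta>, of t] growth \<open>\<bar>t\<bar> \<le> T\<close> by simp
  next
    case False
    have "norm (\<delta> (- (- t))) \<le> (norm (\<delta> (- 0)) + b / L) * exp (L * (- t))"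
      using growth \<open>\<bar>t\<bar> \<le> T\<close> False
      by (intro gronwall_forward[OF \<open>L > 0\<close> \<open>b \<ge> 0\<close> has_vector_derivative_reflect[OF \<delta>]]) auto
    then show ?thesis using False by simp
  qed
  also have "\<dots> \<le> (norm (\<delta> 0) + b / L) * exp (L * T)"
    using \<open>L > 0\<close> \<open>b \<ge> 0\<close> \<open>\<bar>t\<bar> \<le> T\<close> by (intro mult_left_mono) auto
  finally show ?thesis .
qed

section \<open>Global solutions of Lipschitz ODEs\<close>

definition integral0 :: "(real \<Rightarrow> 'a::banach) \<Rightarrow> real \<Rightarrow> 'a" where
  "integral0 h t = (if 0 \<le> t then integral {0..t} h else - integral {t..0} h)"

lemma integral0_at_0 [simp]: "integral0 h 0 = 0"
  by (simp add: integral0_def)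

lemma integral0_has_vector_derivative:
  assumes "continuous_on UNIV h"
  shows "(integral0 h has_vector_derivative h t) (at t)"
proof -
  define a where "a = min t 0 - 1"
  have h_int: "h integrable_on {u..v}" for u v
    by (rule integrable_continuous_real[OF continuous_on_subset[OF assms]]) simp
  have shift: "integral0 h s = integral {a..s} h - integral {a..0} h" if "a < s" for s
  proof (cases "0 \<le> s")
    case True
    then have "integral {a..0} h + integral {0..s} h = integral {a..s} h"
      by (intro Henstock_Kurzweil_Integration.integral_combine h_int) (auto simp: a_def)
    moreover have "integral0 h s = integral {0..s} h" using True by (simp add: integral0_def)
    ultimately show ?thesis by (metis add_diff_cancel_left')
  next
    case False
    then have "integral {a..s} h + integral {s..0} h = integral {a..0} h"
      using that by (intro Henstock_Kurzweil_Integration.integral_combine h_int) auto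
    moreover have "integral0 h s = - integral {s..0} h" using False by (simp add: integral0_def)
    ultimately show ?thesis by (metis add_diff_cancel_left' minus_diff_eq)
  qed
  have "((\<lambda>s. integral {a..s} h) has_vector_derivative h t) (at t within {a..t + 1})"
    by (rule integral_has_vector_derivative[OF continuous_on_subset[OF assms]]) (auto simp: a_def)
  moreover have "t \<in> interior {a..t + 1}" by (simp add: a_def)
  ultimately have "((\<lambda>s. integral {a..s} h) has_vector_derivative h t) (at t)"
    by (metis at_within_interior)
  then have "((\<lambda>s. integral {a..s} h - integral {a..0} h) has_vector_derivative h t) (at t)"
    using has_vector_derivative_diff[OF _ has_vector_derivative_const] by fastforce
  then show ?thesis
  proof (rule has_vector_derivative_transform_within_open[where S = "{a<..}"])
    show "t \<in> {a<..}" by (simp add: a_def)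
  qed (simp_all add: shift)
qed

fun picard :: "('a::banach \<Rightarrow> 'a) \<Rightarrow> 'a \<Rightarrow> nat \<Rightarrow> real \<Rightarrow> 'a" where
  "picard F x 0 = (\<lambda>t. x)"
| "picard F x (Suc k) = (\<lambda>t. x + integral0 (\<lambda>s. F (picard F x k s)) t)"

lemma picard_at_0 [simp]: "picard F x k 0 = x"
  by (cases k) simp_all

declare picard.simps(2) [simp del]

definition picard_limit :: "('a::banach \<Rightarrow> 'a) \<Rightarrow> 'a \<Rightarrow> real \<Rightarrow> 'a" where
  "picard_limit F x t = x + (\<Sum>k. picard F x (Suc k) t - picard F x k t)"

context
  fixes F :: "'a::banach \<Rightarrow> 'a" and L :: real
  assumes lipschitz: "L-lipschitz_on UNIV F"
begin

lemma continuous_on_picard: "continuous_on UNIV (picard F x k)"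
proof (induction k)
  case (Suc k)
  have "continuous_on UNIV (\<lambda>s. F (picard F x k s))"
    using continuous_on_compose2[OF lipschitz_on_continuous_on[OF lipschitz] Suc] by simp
  then show ?case
    using continuous_on_add[OF continuous_on_const
        continuous_on_if_has_vector_derivative[OF integral0_has_vector_derivative]]
    by (simp add: picard.simps(2))
qed simp

lemma picard_has_vector_derivative:
  "(picard F x (Suc k) has_vector_derivative F (picard F x k t)) (at t)"
proof -
  have "continuous_on UNIV (\<lambda>s. F (picard F x k s))"
    using continuous_on_compose2[OF lipschitz_on_continuous_on[OF lipschitz] continuous_on_picard] by simp
  then show ?thesis
    using has_vector_derivative_add[OF has_vector_derivative_const integral0_has_vector_derivative]
    by (fastforce simp: picard.simps(2))
qed

lemma norm_picard_step:
  "norm (picard F x (Suc k) t - picard F x k t) \<le> norm (F x) * L ^ k * \<bar>t\<bar> ^ Suc k / fact (Suc k)"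
proof (induction k arbitrary: t)
  case 0
  have "((\<lambda>s. picard F x (Suc 0) s - x) has_vector_derivative F x - 0) (at s)" for s
    using has_vector_derivative_diff[OF picard_has_vector_derivative[of x 0] has_vector_derivative_const]
    by simp
  then have "norm ((\<lambda>s. picard F x (Suc 0) s - x) t) \<le> norm (F x) * \<bar>t\<bar> ^ Suc 0 / fact (Suc 0)"
    by (rule norm_le_power_bound) simp_all
  then show ?case by simp
next
  case (Suc k)
  have step: "norm (F (picard F x (Suc k) s) - F (picard F x k s)) \<le> norm (F x) * L ^ Suc k * \<bar>s\<bar> ^ Suc k / fact (Suc k)" for s
  proof -
    have "norm (F (picard F x (Suc k) s) - F (picard F x k s)) \<le> L * norm (picard F x (Suc k) s - picard F x k s)"
      using lipschitz_on_normD[OF lipschitz] by simp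
    also have "\<dots> \<le> L * (norm (F x) * L ^ k * \<bar>s\<bar> ^ Suc k / fact (Suc k))"
      using Suc lipschitz_on_nonneg[OF lipschitz] by (intro mult_left_mono)
    finally show ?thesis by (simp add: algebra_simps)
  qed
  have "norm ((\<lambda>s. picard F x (Suc (Suc k)) s - picard F x (Suc k) s) t)
      \<le> (norm (F x) * L ^ Suc k) * \<bar>t\<bar> ^ Suc (Suc k) / fact (Suc (Suc k))"
    by (rule norm_le_power_bound[OF has_vector_derivative_diff[OF
          picard_has_vector_derivative picard_has_vector_derivative]]) (simp, rule step)
  then show ?case by simp
qed

lemma uniform_limit_picard: "uniform_limit {-T..T} (picard F x) (picard_limit F x) sequentially"
proof -
  define M where "M k = norm (F x) * T * ((L * T) ^ k /\<^sub>R fact k)" for k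
  have "summable M" unfolding M_def by (intro summable_mult summable_exp_generic)
  have bound: "norm (picard F x (Suc k) t - picard F x k t) \<le> M k" if "t \<in> {-T..T}" for k t
  proof -
    have "\<bar>t\<bar> \<le> T" using that by auto
    have "norm (picard F x (Suc k) t - picard F x k t) \<le> norm (F x) * L ^ k * \<bar>t\<bar> ^ Suc k / fact (Suc k)"
      by (rule norm_picard_step)
    also have "\<dots> \<le> norm (F x) * L ^ k * T ^ Suc k / fact k"
      using \<open>\<bar>t\<bar> \<le> T\<close> lipschitz_on_nonneg[OF lipschitz]
      by (intro frac_le mult_left_mono power_mono fact_mono) auto
    also have "\<dots> = M k" by (simp add: M_def field_simps)
    finally show ?thesis .
  qed
  have "uniform_limit {-T..T} (\<lambda>n t. x + (\<Sum>k<n. picard F x (Suc k) t - picard F x k t))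
      (picard_limit F x) sequentially"
    unfolding picard_limit_def
    by (intro uniform_limit_add[OF uniform_limit_const] Weierstrass_m_test_ev[OF always_eventually \<open>summable M\<close>])
      (use bound in blast)
  moreover have "x + (\<Sum>k<n. picard F x (Suc k) t - picard F x k t) = picard F x n t" for n t
    using sum_lessThan_telescope[of "\<lambda>k. picard F x k t" n] by simp
  ultimately show ?thesis by simp
qed

lemma tendsto_picard: "(\<lambda>n. picard F x n t) \<longlonglongrightarrow> picard_limit F x t"
  by (rule tendsto_uniform_limitI[OF uniform_limit_picard[where T = "\<bar>t\<bar>"]]) auto

lemma picard_limit_has_vector_derivative:
  "(picard_limit F x has_vector_derivative F (picard_limit F x t)) (at t)"
proof -
  define S where "S = {-(\<bar>t\<bar> + 1)..\<bar>t\<bar> + 1}"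
  have "uniform_limit S (picard F x) (picard_limit F x) sequentially"
    unfolding S_def by (rule uniform_limit_picard)
  then have field_limit: "uniform_limit S (\<lambda>n s. F (picard F x n s)) (\<lambda>s. F (picard_limit F x s)) sequentially"
    by (rule uniform_limit_compose_uniformly_continuous_on[OF _
          lipschitz_on_uniformly_continuous[OF lipschitz]]) auto
  have "\<exists>g. \<forall>s\<in>S. (\<lambda>n. picard F x (Suc n) s) \<longlonglongrightarrow> g s \<and>
      (g has_derivative (\<lambda>h. h *\<^sub>R F (picard_limit F x s))) (at s within S)"
  proof (rule has_derivative_sequence)
    show "convex S" "0 \<in> S" by (simp_all add: S_def)
    show "(\<lambda>n. picard F x (Suc n) 0) \<longlonglongrightarrow> x" by simp
    show "(picard F x (Suc n) has_derivative (\<lambda>h. h *\<^sub>R F (picard F x n s))) (at s within S)" for n s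
      using picard_has_vector_derivative has_vector_derivative_at_within
      unfolding has_vector_derivative_def by blast
    fix e :: real assume "0 < e"
    with field_limit have "\<forall>\<^sub>F n in sequentially. \<forall>s\<in>S. dist (F (picard F x n s)) (F (picard_limit F x s)) < e"
      unfolding uniform_limit_iff by blast
    then show "\<forall>\<^sub>F n in sequentially. \<forall>s\<in>S. \<forall>h.
        norm (h *\<^sub>R F (picard F x n s) - h *\<^sub>R F (picard_limit F x s)) \<le> e * norm h"
    proof (rule eventually_mono, intro ballI allI)
      fix n s h
      assume "\<forall>s\<in>S. dist (F (picard F x n s)) (F (picard_limit F x s)) < e" and "s \<in> S"
      then have "norm (F (picard F x n s) - F (picard_limit F x s)) \<le> e"
        by (simp add: dist_norm less_imp_le)
      then have "\<bar>h\<bar> * norm (F (picard F x n s) - F (picard_limit F x s)) \<le> \<bar>h\<bar> * e"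
        by (rule mult_left_mono) simp
      then show "norm (h *\<^sub>R F (picard F x n s) - h *\<^sub>R F (picard_limit F x s)) \<le> e * norm h"
        by (simp add: scaleR_diff_right[symmetric] mult.commute)
    qed
  qed
  then obtain g where g: "\<And>s. s \<in> S \<Longrightarrow> (\<lambda>n. picard F x (Suc n) s) \<longlonglongrightarrow> g s"
    "\<And>s. s \<in> S \<Longrightarrow> (g has_derivative (\<lambda>h. h *\<^sub>R F (picard_limit F x s))) (at s within S)"
    by blast
  have "g s = picard_limit F x s" if "s \<in> S" for s
    using LIMSEQ_unique[OF g(1)[OF that] LIMSEQ_Suc[OF tendsto_picard]] .
  then have "(picard_limit F x has_derivative (\<lambda>h. h *\<^sub>R F (picard_limit F x t))) (at t within S)"
    by (intro has_derivative_transform[OF _ _ g(2)]) (auto simp: S_def)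
  moreover have "t \<in> interior S" by (auto simp: S_def)
  ultimately show ?thesis
    by (metis at_within_interior has_vector_derivative_def)
qed

theorem lipschitz_ode_exists: "\<exists>\<gamma>. \<gamma> 0 = x \<and> (\<forall>t. (\<gamma> has_vector_derivative F (\<gamma> t)) (at t))"
proof (intro exI conjI allI)
  show "picard_limit F x 0 = x" using LIMSEQ_unique[OF tendsto_picard] by simp
qed (rule picard_limit_has_vector_derivative)

end

section \<open>Gradients of \<open>C\<^sup>1\<^sup>,\<^sup>1\<close> functions\<close>

definition grad :: "('a::real_inner \<Rightarrow> real) \<Rightarrow> 'a \<Rightarrow> 'a" where
  "grad f x = (THE g. (f has_derivative (\<lambda>h. g \<bullet> h)) (at x))"

lemma grad_eqI:
  assumes "(f has_derivative (\<lambda>h. g \<bullet> h)) (at x)"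
  shows "grad f x = g"
  unfolding grad_def
proof (rule the_equality)
  fix g' assume "(f has_derivative (\<lambda>h. g' \<bullet> h)) (at x)"
  then have "(\<lambda>h. g' \<bullet> h) = (\<lambda>h. g \<bullet> h)" by (rule has_derivative_unique[OF _ assms])
  then have "g' \<bullet> (g' - g) = g \<bullet> (g' - g)" by (rule fun_cong)
  then have "(g' - g) \<bullet> (g' - g) = 0" by (simp add: inner_diff_left)
  then show "g' = g" by simp
qed (rule assms)

lemma C11I:
  assumes "\<And>x. (f has_derivative (\<lambda>h. g x \<bullet> h)) (at x)" and "L-lipschitz_on UNIV g"
  shows "C11 f"
proof -
  have "norm (g v - g w) \<le> L * norm (v - w)" for v w
    using lipschitz_onD[OF assms(2)] by (simp add: dist_norm)
  then show ?thesis unfolding C11_def using assms(1) by blast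
qed

lemma C11_has_derivative:
  assumes "C11 f"
  shows "(f has_derivative (\<lambda>h. grad f x \<bullet> h)) (at x)"
proof -
  obtain g where deriv: "\<And>x. (f has_derivative (\<lambda>h. g x \<bullet> h)) (at x)"
    using assms unfolding C11_def by blast
  then have "grad f x = g x" by (rule grad_eqI)
  with deriv show ?thesis by simp
qed

lemma C11_lipschitz_grad:
  assumes "C11 f"
  shows "\<exists>L. L-lipschitz_on UNIV (grad f)"
proof -
  obtain g L where deriv: "\<And>x. (f has_derivative (\<lambda>h. g x \<bullet> h)) (at x)"
    and lip: "\<And>v w. norm (g v - g w) \<le> L * norm (v - w)"
    using assms unfolding C11_def by blast
  have "grad f = g" using grad_eqI[OF deriv] by auto
  moreover have "norm (g v - g w) \<le> max L 0 * norm (v - w)" for v w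
    using lip[of v w] mult_right_mono[OF max.cobounded1 norm_ge_zero] by (rule order.trans)
  then have "(max L 0)-lipschitz_on UNIV g"
    by (intro lipschitz_onI) (auto simp: dist_norm)
  ultimately show ?thesis by auto
qed

lemma C11_diff:
  assumes "C11 f" "C11 g"
  shows "C11 (\<lambda>x. f x - g x)"
proof -
  obtain Lf Lg where "Lf-lipschitz_on UNIV (grad f)" "Lg-lipschitz_on UNIV (grad g)"
    using C11_lipschitz_grad assms by blast
  then have "(Lf + Lg)-lipschitz_on UNIV (\<lambda>x. grad f x - grad g x)" by (rule lipschitz_on_diff)
  moreover have "((\<lambda>x. f x - g x) has_derivative (\<lambda>h. (grad f x - grad g x) \<bullet> h)) (at x)" for x
    using has_derivative_diff[OF C11_has_derivative[OF assms(1)] C11_has_derivative[OF assms(2)]]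
    by (simp add: inner_diff_left)
  ultimately show ?thesis by (intro C11I)
qed

lemma C11_cmult:
  assumes "C11 f"
  shows "C11 (\<lambda>x. c * f x)"
proof -
  obtain L where "L-lipschitz_on UNIV (grad f)"
    using C11_lipschitz_grad[OF assms] by blast
  then have "(\<bar>c\<bar> * L)-lipschitz_on UNIV (\<lambda>x. c *\<^sub>R grad f x)" by (rule lipschitz_on_cmult)
  moreover have "((\<lambda>x. c * f x) has_derivative (\<lambda>h. (c *\<^sub>R grad f x) \<bullet> h)) (at x)" for x
    using has_derivative_mult_right[OF C11_has_derivative[OF assms]] by simp
  ultimately show ?thesis by (intro C11I)
qed

lemma has_derivative_partial_fst:
  assumes "(f has_derivative (\<lambda>h. g \<bullet> h)) (at (x, y))"
  shows "((\<lambda>x'. f (x', y)) has_derivative (\<lambda>h. fst g \<bullet> h)) (at x)"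
proof -
  have "((\<lambda>x'. (x', y)) has_derivative (\<lambda>h. (h, 0))) (at x)"
    by (rule has_derivative_Pair[OF has_derivative_ident has_derivative_const, simplified])
  from has_derivative_compose[OF this assms] show ?thesis
    by (simp add: inner_prod_def)
qed

lemma C11_fst:
  fixes f :: "'a::real_inner \<Rightarrow> real"
  assumes "C11 (\<lambda>w :: 'a \<times> 'b::real_inner. f (fst w))"
  shows "C11 f"
proof -
  obtain L where L: "L-lipschitz_on UNIV (grad (\<lambda>w :: 'a \<times> 'b. f (fst w)))"
    using C11_lipschitz_grad[OF assms] by blast
  define g where "g x = fst (grad (\<lambda>w. f (fst w)) (x, 0 :: 'b))" for x
  have deriv: "(f has_derivative (\<lambda>h. g x \<bullet> h)) (at x)" for x
    using has_derivative_partial_fst[OF C11_has_derivative[OF assms, of "(x, 0)"]]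
    by (simp add: g_def)
  have "L-lipschitz_on UNIV g"
  proof (rule lipschitz_onI)
    fix x y
    define d where "d = grad (\<lambda>w. f (fst w)) (x, 0) - grad (\<lambda>w. f (fst w)) (y, 0 :: 'b)"
    have "dist (g x) (g y) = norm (fst d)" by (simp add: g_def d_def dist_norm)
    also have "\<dots> \<le> norm d" using norm_fst_le[of "fst d" "snd d"] by simp
    also have "\<dots> = dist (grad (\<lambda>w. f (fst w)) (x, 0)) (grad (\<lambda>w. f (fst w)) (y, 0 :: 'b))"
      by (simp add: d_def dist_norm)
    also have "\<dots> \<le> L * dist (x, 0 :: 'b) (y, 0)" using lipschitz_onD[OF L] by simp
    finally show "dist (g x) (g y) \<le> L * dist x y" by (simp add: dist_Pair_Pair)
  qed (rule lipschitz_on_nonneg[OF L])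
  then show ?thesis using deriv by (rule C11I[rotated])
qed

section \<open>Hamiltonian curves\<close>

lemma sympJ_diff: "sympJ v - sympJ w = sympJ (v - w)"
  and sympJ_add: "sympJ (v + w) = sympJ v + sympJ w"
  and sympJ_scaleR: "sympJ (c *\<^sub>R v) = c *\<^sub>R sympJ v"
  by (simp_all add: sympJ_def)

lemma norm_sympJ [simp]: "norm (sympJ (v :: 'a::real_normed_vector \<times> 'a)) = norm v"
  by (simp add: sympJ_def norm_prod_def add.commute)

lemma inner_sympJ_self [simp]: "(v :: 'a::real_inner \<times> 'a) \<bullet> sympJ v = 0"
  by (simp add: sympJ_def inner_prod_def inner_commute)

lemma sympJ2_diff: "sympJ2 v - sympJ2 w = sympJ2 (v - w)"
  and sympJ2_add: "sympJ2 (v + w) = sympJ2 v + sympJ2 w"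
  and sympJ2_scaleR: "sympJ2 (c *\<^sub>R v) = c *\<^sub>R sympJ2 v"
  by (simp_all add: sympJ2_def sympJ_diff sympJ_add sympJ_scaleR)

lemma norm_sympJ2 [simp]: "norm (sympJ2 v) = norm v"
  by (cases v) (simp add: sympJ2_def norm_Pair)

lemma inner_sympJ2_self [simp]: "v \<bullet> sympJ2 v = 0"
  by (cases v) (simp add: sympJ2_def)

lemma lipschitz_on_sympJ: "1-lipschitz_on UNIV (sympJ :: 'a::real_normed_vector \<times> 'a \<Rightarrow> _)"
  by (intro lipschitz_onI) (simp_all add: dist_norm sympJ_diff)

lemma lipschitz_on_sympJ2:
  "1-lipschitz_on UNIV (sympJ2 :: ('a::real_normed_vector \<times> 'a) \<times> ('b::real_normed_vector \<times> 'b) \<Rightarrow> _)"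
  by (intro lipschitz_onI) (simp_all add: dist_norm sympJ2_diff)

lemma ham_curve_iff:
  assumes "C11 H"
  shows "ham_curve H J \<gamma> \<longleftrightarrow> (\<forall>t. (\<gamma> has_vector_derivative J (grad H (\<gamma> t))) (at t))"
  unfolding ham_curve_def using C11_has_derivative[OF assms] grad_eqI by metis

lemma ham_curve_exists:
  fixes H :: "'p::{real_inner,banach} \<Rightarrow> real"
  assumes "C11 H" and "K-lipschitz_on UNIV J"
  shows "\<exists>\<gamma>. ham_curve H J \<gamma> \<and> \<gamma> 0 = x"
proof -
  obtain L where "L-lipschitz_on UNIV (grad H)"
    using C11_lipschitz_grad[OF assms(1)] by blast
  then have "(K * L)-lipschitz_on UNIV (\<lambda>w. J (grad H w))"
    using lipschitz_on_compose2 lipschitz_on_subset[OF assms(2)] by blast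
  then show ?thesis
    using lipschitz_ode_exists ham_curve_iff[OF assms(1)] by blast
qed

lemma has_real_derivative_comp_grad:
  assumes "(\<gamma> has_vector_derivative v) (at t)" and "(f has_derivative (\<lambda>h. g \<bullet> h)) (at (\<gamma> t))"
  shows "((\<lambda>t. f (\<gamma> t)) has_real_derivative g \<bullet> v) (at t)"
  using has_derivative_compose[OF assms(1)[unfolded has_vector_derivative_def] assms(2)]
  by (simp add: has_field_derivative_def mult_commute_abs)

lemma ham_curve_energy:
  assumes skew: "\<And>v. v \<bullet> J v = 0" and "ham_curve H J \<gamma>"
  shows "H (\<gamma> t) = H (\<gamma> 0)"
proof -
  have "\<forall>s. ((\<lambda>s. H (\<gamma> s)) has_real_derivative 0) (at s)"
  proof
    fix s
    obtain g where g: "(H has_derivative (\<lambda>h. g \<bullet> h)) (at (\<gamma> s))"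
      and \<gamma>': "(\<gamma> has_vector_derivative J g) (at s)"
      using \<open>ham_curve H J \<gamma>\<close> unfolding ham_curve_def by blast
    show "((\<lambda>s. H (\<gamma> s)) has_real_derivative 0) (at s)"
      using has_real_derivative_comp_grad[OF \<gamma>' g] skew[of g] by simp
  qed
  then show ?thesis by (rule DERIV_isconst_all)
qed

section \<open>Penalized Hamiltonians\<close>

lemma inner_sympJ2_shift:
  fixes v :: "('a::real_inner \<times> 'a) \<times> ('b::real_inner \<times> 'b)"
  shows "v \<bullet> sympJ2 ((a, 0) + c *\<^sub>R v) = fst v \<bullet> sympJ a"
  by (simp add: sympJ2_add sympJ2_scaleR inner_add_right) (simp add: sympJ2_def inner_prod_def sympJ_def)

lemma powr_le_imp_le_root:
  fixes x A p :: real
  assumes "0 \<le> x" "0 < p" "x powr p \<le> A"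
  shows "x \<le> A powr (1 / p)"
proof -
  have "x = (x powr p) powr (1 / p)" using assms by (simp add: powr_powr)
  also have "\<dots> \<le> A powr (1 / p)" using assms by (intro powr_mono2) auto
  finally show ?thesis .
qed

locale penalized_hamiltonian =
  fixes H0 :: "'a::{real_inner,banach} \<times> 'a \<Rightarrow> real"
    and \<Lambda> :: "'a \<times> 'a \<Rightarrow> 'b::{real_inner,banach} \<times> 'b \<Rightarrow> real"
    and c0 c1 p :: real
    and c2 :: "real \<Rightarrow> real"
  assumes C11_H: "\<And>\<kappa>. \<kappa> > 0 \<Longrightarrow> C11 (\<lambda>w. H0 (fst w) + \<kappa> * \<Lambda> (fst w) (snd w))"
    and Lambda_nonneg: "\<And>z \<zeta>. \<Lambda> z \<zeta> \<ge> 0"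
    and c0_pos: "c0 > 0" and p_pos: "p > 0"
    and coercive: "\<And>\<kappa> z \<zeta>. \<kappa> > 0 \<Longrightarrow>
        H0 z + \<kappa> * \<Lambda> z \<zeta> \<ge> c0 * (norm z powr p + \<kappa> * norm \<zeta> powr p) - c1"
    and c2_pos: "\<And>R. R > 0 \<Longrightarrow> c2 R > 0"
    and dLambda: "\<And>R z \<zeta> g. R > 0 \<Longrightarrow> norm z \<le> R \<Longrightarrow>
        ((\<lambda>z'. \<Lambda> z' \<zeta>) has_derivative (\<lambda>h. g \<bullet> h)) (at z) \<Longrightarrow> norm g \<le> c2 R * \<Lambda> z \<zeta>"
begin

definition H :: "real \<Rightarrow> ('a \<times> 'a) \<times> ('b \<times> 'b) \<Rightarrow> real" where
  "H \<kappa> w = H0 (fst w) + \<kappa> * \<Lambda> (fst w) (snd w)"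

lemma C11_H0_fst: "C11 (\<lambda>w :: ('a \<times> 'a) \<times> ('b \<times> 'b). H0 (fst w))"
proof -
  have "C11 (\<lambda>w. 2 * (H0 (fst w) + 1 * \<Lambda> (fst w) (snd w)) - (H0 (fst w) + 2 * \<Lambda> (fst w) (snd w)))"
    by (intro C11_diff C11_cmult C11_H) simp_all
  then show ?thesis by (simp add: algebra_simps)
qed

lemma C11_H0: "C11 H0"
  by (rule C11_fst[OF C11_H0_fst])

lemma C11_Lambda: "C11 (\<lambda>w. \<Lambda> (fst w) (snd w))"
proof -
  have "C11 (\<lambda>w. (H0 (fst w) + 2 * \<Lambda> (fst w) (snd w)) - (H0 (fst w) + 1 * \<Lambda> (fst w) (snd w)))"
    by (intro C11_diff C11_H) simp_all
  then show ?thesis by simp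
qed

abbreviation grad\<Lambda> :: "('a \<times> 'a) \<times> ('b \<times> 'b) \<Rightarrow> ('a \<times> 'a) \<times> ('b \<times> 'b)" where
  "grad\<Lambda> \<equiv> grad (\<lambda>w. \<Lambda> (fst w) (snd w))"

lemma grad_H: "grad (H \<kappa>) w = (grad H0 (fst w), 0) + \<kappa> *\<^sub>R grad\<Lambda> w"
proof (rule grad_eqI)
  have "((\<lambda>w. H0 (fst w)) has_derivative (\<lambda>h. grad H0 (fst w) \<bullet> fst h)) (at w)"
    by (rule has_derivative_compose[OF has_derivative_fst[OF has_derivative_ident] C11_has_derivative[OF C11_H0]])
  from has_derivative_add[OF this has_derivative_mult_right[OF C11_has_derivative[OF C11_Lambda]]]
  show "(H \<kappa> has_derivative (\<lambda>h. ((grad H0 (fst w), 0) + \<kappa> *\<^sub>R grad\<Lambda> w) \<bullet> h)) (at w)"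
    unfolding H_def by (simp add: inner_add_left inner_prod_def algebra_simps)
qed

lemma norm_fst_grad\<Lambda>:
  assumes "R > 0" "norm z \<le> R"
  shows "norm (fst (grad\<Lambda> (z, \<zeta>))) \<le> c2 R * \<Lambda> z \<zeta>"
proof -
  have "((\<lambda>z'. \<Lambda> z' \<zeta>) has_derivative (\<lambda>h. fst (grad\<Lambda> (z, \<zeta>)) \<bullet> h)) (at z)"
    using has_derivative_partial_fst[OF C11_has_derivative[OF C11_Lambda]] by simp
  then show ?thesis by (rule dLambda[OF assms])
qed

lemma flow_has_vector_derivative:
  assumes "\<kappa> > 0" "ham_curve (H \<kappa>) sympJ2 \<gamma>"
  shows "(\<gamma> has_vector_derivative sympJ2 ((grad H0 (fst (\<gamma> t)), 0) + \<kappa> *\<^sub>R grad\<Lambda> (\<gamma> t))) (at t)"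
  using assms C11_H[OF \<open>\<kappa> > 0\<close>] by (simp add: ham_curve_iff H_def[abs_def] grad_H[unfolded H_def[abs_def]])

lemma flow_energy: "ham_curve (H \<kappa>) sympJ2 \<gamma> \<Longrightarrow> H \<kappa> (\<gamma> t) = H \<kappa> (\<gamma> 0)"
  by (rule ham_curve_energy[OF inner_sympJ2_self])

lemma coercive_bounds:
  assumes "\<kappa> > 0" "H \<kappa> w \<le> E"
  shows "norm (fst w) \<le> ((E + c1) / c0) powr (1 / p)"
    and "norm (snd w) \<le> ((E + c1) / (c0 * \<kappa>)) powr (1 / p)"
proof -
  have "c0 * norm (fst w) powr p + c0 * (\<kappa> * norm (snd w) powr p) \<le> E + c1"
    using coercive[OF \<open>\<kappa> > 0\<close>, of "fst w" "snd w"] assms(2) by (simp add: H_def algebra_simps)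
  moreover have "0 \<le> c0 * norm (fst w) powr p" "0 \<le> c0 * (\<kappa> * norm (snd w) powr p)"
    using c0_pos \<open>\<kappa> > 0\<close> by simp_all
  ultimately have "norm (fst w) powr p * c0 \<le> E + c1" "norm (snd w) powr p * (c0 * \<kappa>) \<le> E + c1"
    by (simp_all add: mult_ac)
  then have "norm (fst w) powr p \<le> (E + c1) / c0" "norm (snd w) powr p \<le> (E + c1) / (c0 * \<kappa>)"
    using c0_pos \<open>\<kappa> > 0\<close> by (simp_all add: pos_le_divide_eq)
  then show "norm (fst w) \<le> ((E + c1) / c0) powr (1 / p)"
    and "norm (snd w) \<le> ((E + c1) / (c0 * \<kappa>)) powr (1 / p)"
    using p_pos by (simp_all add: powr_le_imp_le_root)
qed

lemma flow_family_exists: "\<exists>\<gamma>. \<forall>\<kappa>>0. ham_curve (H \<kappa>) sympJ2 (\<gamma> \<kappa>) \<and> \<gamma> \<kappa> 0 = w \<kappa>"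
proof -
  have "\<forall>\<kappa>. \<exists>\<gamma>. \<kappa> > 0 \<longrightarrow> ham_curve (H \<kappa>) sympJ2 \<gamma> \<and> \<gamma> 0 = w \<kappa>"
  proof
    fix \<kappa> :: real
    show "\<exists>\<gamma>. \<kappa> > 0 \<longrightarrow> ham_curve (H \<kappa>) sympJ2 \<gamma> \<and> \<gamma> 0 = w \<kappa>"
    proof (cases "\<kappa> > 0")
      case True
      then have "C11 (H \<kappa>)" using C11_H by (simp add: H_def[abs_def])
      then show ?thesis using ham_curve_exists[OF _ lipschitz_on_sympJ2] by blast
    qed simp
  qed
  then have "\<exists>\<gamma>. \<forall>\<kappa>. \<kappa> > 0 \<longrightarrow> ham_curve (H \<kappa>) sympJ2 (\<gamma> \<kappa>) \<and> \<gamma> \<kappa> 0 = w \<kappa>"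
    by (rule choice)
  then show ?thesis by blast
qed

lemma penalty_growth:
  assumes "\<kappa> > 0" and flow: "ham_curve (H \<kappa>) sympJ2 \<gamma>" and "R > 0" "M > 0"
    and z_bound: "\<And>s. \<bar>s\<bar> \<le> T \<Longrightarrow> norm (fst (\<gamma> s)) \<le> R"
    and grad_bound: "\<And>z. norm z \<le> R \<Longrightarrow> norm (grad H0 z) \<le> M"
    and "\<bar>t\<bar> \<le> T"
  shows "\<kappa> * \<Lambda> (fst (\<gamma> t)) (snd (\<gamma> t)) \<le> \<kappa> * \<Lambda> (fst (\<gamma> 0)) (snd (\<gamma> 0)) * exp (c2 R * M * T)"
proof -
  define f where "f s = \<kappa> * \<Lambda> (fst (\<gamma> s)) (snd (\<gamma> s))" for s
  define f' where "f' s = \<kappa> * (fst (grad\<Lambda> (\<gamma> s)) \<bullet> sympJ (grad H0 (fst (\<gamma> s))))" for s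
  have f_nonneg: "f s \<ge> 0" for s
    using \<open>\<kappa> > 0\<close> Lambda_nonneg by (simp add: f_def)
  have "(f has_vector_derivative f' s) (at s)" for s
  proof -
    have "((\<lambda>s. \<Lambda> (fst (\<gamma> s)) (snd (\<gamma> s))) has_real_derivative
        grad\<Lambda> (\<gamma> s) \<bullet> sympJ2 ((grad H0 (fst (\<gamma> s)), 0) + \<kappa> *\<^sub>R grad\<Lambda> (\<gamma> s))) (at s)"
      by (rule has_real_derivative_comp_grad[OF flow_has_vector_derivative[OF \<open>\<kappa> > 0\<close> flow]
            C11_has_derivative[OF C11_Lambda]])
    then have "(f has_real_derivative f' s) (at s)"
      unfolding f_def f'_def inner_sympJ2_shift by (rule DERIV_cmult)
    then show ?thesis by (simp add: has_real_derivative_iff_has_vector_derivative)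
  qed
  moreover have "norm (f' s) \<le> c2 R * M * norm (f s) + 0" if "\<bar>s\<bar> \<le> T" for s
  proof -
    have "norm (f' s) \<le> \<kappa> * (norm (fst (grad\<Lambda> (\<gamma> s))) * norm (grad H0 (fst (\<gamma> s))))"
      using \<open>\<kappa> > 0\<close> Cauchy_Schwarz_ineq2[of "fst (grad\<Lambda> (\<gamma> s))" "sympJ (grad H0 (fst (\<gamma> s)))"]
      by (simp add: f'_def abs_mult)
    also have "\<dots> \<le> \<kappa> * (c2 R * \<Lambda> (fst (\<gamma> s)) (snd (\<gamma> s)) * M)"
      using norm_fst_grad\<Lambda>[OF \<open>R > 0\<close> z_bound[OF that], of "snd (\<gamma> s)"] grad_bound[OF z_bound[OF that]]
        c2_pos[OF \<open>R > 0\<close>] Lambda_nonneg \<open>\<kappa> > 0\<close>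
      by (intro mult_left_mono mult_mono) auto
    also have "\<dots> = c2 R * M * norm (f s) + 0"
      using f_nonneg[of s] by (simp add: f_def)
    finally show ?thesis .
  qed
  moreover have "c2 R * M > 0" using c2_pos[OF \<open>R > 0\<close>] \<open>M > 0\<close> by simp
  ultimately have "norm (f t) \<le> (norm (f 0) + 0 / (c2 R * M)) * exp (c2 R * M * T)"
    using gronwall[of "c2 R * M" 0 f f' T t] \<open>\<bar>t\<bar> \<le> T\<close> by simp
  then show ?thesis using f_nonneg[of t] f_nonneg[of 0] by (simp add: f_def)
qed

lemma slow_deviation:
  assumes "\<kappa> > 0" and flow: "ham_curve (H \<kappa>) sympJ2 \<gamma>" and limit_flow: "ham_curve H0 sympJ zlim"
    and "L > 0" and lip: "L-lipschitz_on UNIV (grad H0)"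
    and "R > 0" and z_bound: "\<And>s. \<bar>s\<bar> \<le> T \<Longrightarrow> norm (fst (\<gamma> s)) \<le> R"
    and "P \<ge> 0" and penalty_bound: "\<And>s. \<bar>s\<bar> \<le> T \<Longrightarrow> \<kappa> * \<Lambda> (fst (\<gamma> s)) (snd (\<gamma> s)) \<le> P"
    and "\<bar>t\<bar> \<le> T"
  shows "norm (fst (\<gamma> t) - zlim t) \<le> (norm (fst (\<gamma> 0) - zlim 0) + c2 R * P / L) * exp (L * T)"
proof (rule gronwall[OF \<open>L > 0\<close> _ _ _ \<open>\<bar>t\<bar> \<le> T\<close>])
  show "c2 R * P \<ge> 0" using c2_pos[OF \<open>R > 0\<close>] \<open>P \<ge> 0\<close> by simp
  define v where "v s = sympJ (grad H0 (fst (\<gamma> s))) + \<kappa> *\<^sub>R sympJ (fst (grad\<Lambda> (\<gamma> s)))" for s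
  have "((\<lambda>s. fst (\<gamma> s)) has_vector_derivative v s) (at s)" for s
    using has_derivative_fst[OF flow_has_vector_derivative[OF \<open>\<kappa> > 0\<close> flow, of s,
        unfolded has_vector_derivative_def]]
    by (simp add: has_vector_derivative_def v_def sympJ2_def sympJ_add sympJ_scaleR)
  moreover have "(zlim has_vector_derivative sympJ (grad H0 (zlim s))) (at s)" for s
    using limit_flow by (simp add: ham_curve_iff[OF C11_H0])
  ultimately show "((\<lambda>s. fst (\<gamma> s) - zlim s) has_vector_derivative v s - sympJ (grad H0 (zlim s))) (at s)" for s
    by (intro has_vector_derivative_diff)
  fix s assume "\<bar>s\<bar> \<le> T"
  have "v s - sympJ (grad H0 (zlim s))
      = sympJ (grad H0 (fst (\<gamma> s)) - grad H0 (zlim s)) + \<kappa> *\<^sub>R sympJ (fst (grad\<Lambda> (\<gamma> s)))"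
    by (simp add: v_def sympJ_diff[symmetric] algebra_simps)
  then have "norm (v s - sympJ (grad H0 (zlim s)))
      \<le> norm (grad H0 (fst (\<gamma> s)) - grad H0 (zlim s)) + \<kappa> * norm (fst (grad\<Lambda> (\<gamma> s)))"
    using \<open>\<kappa> > 0\<close> norm_triangle_ineq[of "sympJ (grad H0 (fst (\<gamma> s)) - grad H0 (zlim s))"
        "\<kappa> *\<^sub>R sympJ (fst (grad\<Lambda> (\<gamma> s)))"] by simp
  also have "\<dots> \<le> L * norm (fst (\<gamma> s) - zlim s) + \<kappa> * (c2 R * \<Lambda> (fst (\<gamma> s)) (snd (\<gamma> s)))"
    using lipschitz_on_normD[OF lip] norm_fst_grad\<Lambda>[OF \<open>R > 0\<close> z_bound[OF \<open>\<bar>s\<bar> \<le> T\<close>], of "snd (\<gamma> s)"]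
      \<open>\<kappa> > 0\<close> by (intro add_mono mult_left_mono) auto
  also have "\<dots> \<le> L * norm (fst (\<gamma> s) - zlim s) + c2 R * P"
    using penalty_bound[OF \<open>\<bar>s\<bar> \<le> T\<close>] c2_pos[OF \<open>R > 0\<close>] by (simp add: mult.left_commute)
  finally show "norm (v s - sympJ (grad H0 (zlim s))) \<le> L * norm (fst (\<gamma> s) - zlim s) + c2 R * P" .
qed

end

lemma tendsto_SUP_zero:
  fixes \<phi> :: "'a \<Rightarrow> 'b \<Rightarrow> real"
  assumes "A \<noteq> {}"
    and bound: "\<forall>\<^sub>F x in F. \<forall>t\<in>A. 0 \<le> \<phi> x t \<and> \<phi> x t \<le> B x"
    and "(B \<longlongrightarrow> 0) F"
  shows "((\<lambda>x. SUP t\<in>A. \<phi> x t) \<longlongrightarrow> 0) F"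
proof (rule tendsto_sandwich[OF _ _ tendsto_const \<open>(B \<longlongrightarrow> 0) F\<close>])
  obtain t0 where "t0 \<in> A" using \<open>A \<noteq> {}\<close> by blast
  show "\<forall>\<^sub>F x in F. 0 \<le> (SUP t\<in>A. \<phi> x t)"
    using bound by eventually_elim (use \<open>t0 \<in> A\<close> in \<open>force intro: cSUP_upper2 bdd_aboveI2\<close>)
  show "\<forall>\<^sub>F x in F. (SUP t\<in>A. \<phi> x t) \<le> B x"
    using bound by eventually_elim (use \<open>A \<noteq> {}\<close> in \<open>auto intro: cSUP_least\<close>)
qed

locale penalized_family = penalized_hamiltonian H0 \<Lambda> c0 c1 p c2 for H0 \<Lambda> c0 c1 p c2 +
  fixes \<kappa>0 :: real and z0 :: "real \<Rightarrow> 'a \<times> 'a" and \<zeta>0 :: "real \<Rightarrow> 'b \<times> 'b" and zinit :: "'a \<times> 'a"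
    and \<gamma> :: "real \<Rightarrow> real \<Rightarrow> ('a \<times> 'a) \<times> ('b \<times> 'b)"
  assumes kappa0_pos: "\<kappa>0 > 0"
    and init_conv: "(z0 \<longlongrightarrow> zinit) at_top"
    and init_Lambda: "((\<lambda>\<kappa>. \<kappa> * \<Lambda> (z0 \<kappa>) (\<zeta>0 \<kappa>)) \<longlongrightarrow> 0) at_top"
    and init_energy: "bdd_above ((\<lambda>\<kappa>. H0 (z0 \<kappa>) + \<kappa> * \<Lambda> (z0 \<kappa>) (\<zeta>0 \<kappa>)) ` {\<kappa>0..})"
    and flow: "\<And>\<kappa>. \<kappa> \<ge> \<kappa>0 \<Longrightarrow> ham_curve (H \<kappa>) sympJ2 (\<gamma> \<kappa>)"
    and flow_init: "\<And>\<kappa>. \<kappa> \<ge> \<kappa>0 \<Longrightarrow> \<gamma> \<kappa> 0 = (z0 \<kappa>, \<zeta>0 \<kappa>)"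
begin

definition E :: real where "E = (SUP \<kappa>\<in>{\<kappa>0..}. H0 (z0 \<kappa>) + \<kappa> * \<Lambda> (z0 \<kappa>) (\<zeta>0 \<kappa>))"
definition R :: real where "R = ((E + c1) / c0) powr (1 / p) + 1"
definition L :: real where "L = (SOME L. L-lipschitz_on UNIV (grad H0)) + 1"
definition M :: real where "M = norm (grad H0 0) + L * R"
definition K :: real where "K = c2 R * M"

lemma flow_energy_le: "\<kappa> \<ge> \<kappa>0 \<Longrightarrow> H \<kappa> (\<gamma> \<kappa> t) \<le> E"
  using flow_energy[OF flow, of \<kappa> t] flow_init cSUP_upper[OF _ init_energy, of \<kappa>]
  by (simp add: H_def E_def)

lemma E_plus_c1_nonneg: "E + c1 \<ge> 0"
proof -
  let ?w = "\<gamma> \<kappa>0 0"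
  have "0 \<le> c0 * (norm (fst ?w) powr p + \<kappa>0 * norm (snd ?w) powr p)"
    using c0_pos kappa0_pos by simp
  then show ?thesis
    using coercive[OF kappa0_pos, of "fst ?w" "snd ?w"] flow_energy_le[of \<kappa>0 0]
    unfolding H_def by linarith
qed

lemma R_pos: "R > 0"
  by (simp add: R_def add_nonneg_pos)

lemma fst_flow_bound:
  assumes "\<kappa> \<ge> \<kappa>0"
  shows "norm (fst (\<gamma> \<kappa> t)) \<le> R"
proof -
  have "norm (fst (\<gamma> \<kappa> t)) \<le> ((E + c1) / c0) powr (1 / p)"
    using assms kappa0_pos by (intro coercive_bounds(1)[OF _ flow_energy_le]) auto
  then show ?thesis by (simp add: R_def)
qed

lemma snd_flow_bound: "\<kappa> \<ge> \<kappa>0 \<Longrightarrow> norm (snd (\<gamma> \<kappa> t)) \<le> ((E + c1) / (c0 * \<kappa>)) powr (1 / p)"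
  using coercive_bounds(2)[OF _ flow_energy_le] kappa0_pos by simp

lemma L_pos: "L > 0" and lipschitz_grad_H0: "L-lipschitz_on UNIV (grad H0)"
proof -
  have "\<exists>L. L-lipschitz_on UNIV (grad H0)" by (rule C11_lipschitz_grad[OF C11_H0])
  then have "(SOME L. L-lipschitz_on UNIV (grad H0))-lipschitz_on UNIV (grad H0)" by (rule someI_ex)
  then show "L > 0" "L-lipschitz_on UNIV (grad H0)"
    unfolding L_def using lipschitz_on_nonneg by (force intro: lipschitz_on_mono)+
qed

lemma M_pos: "M > 0"
  using L_pos R_pos by (simp add: M_def add_nonneg_pos)

lemma norm_grad_H0_le:
  assumes "norm z \<le> R"
  shows "norm (grad H0 z) \<le> M"
proof -
  have "norm (grad H0 z - grad H0 0) \<le> L * norm z"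
    using lipschitz_on_normD[OF lipschitz_grad_H0, of z 0] by simp
  also have "\<dots> \<le> L * R" using assms L_pos by (intro mult_left_mono) auto
  finally show ?thesis using norm_triangle_ineq2[of "grad H0 z" "grad H0 0"] by (simp add: M_def)
qed

lemma penalty_bound:
  "\<kappa> \<ge> \<kappa>0 \<Longrightarrow> \<bar>t\<bar> \<le> T \<Longrightarrow>
    \<kappa> * \<Lambda> (fst (\<gamma> \<kappa> t)) (snd (\<gamma> \<kappa> t)) \<le> \<kappa> * \<Lambda> (z0 \<kappa>) (\<zeta>0 \<kappa>) * exp (K * T)"
  using penalty_growth[OF _ flow R_pos M_pos fst_flow_bound norm_grad_H0_le] flow_init kappa0_pos
  by (simp add: K_def)

lemma fst_deviation_bound:
  assumes "\<kappa> \<ge> \<kappa>0" "ham_curve H0 sympJ zc" "zc 0 = zinit" "\<bar>t\<bar> \<le> T"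
  shows "norm (fst (\<gamma> \<kappa> t) - zc t)
    \<le> (norm (z0 \<kappa> - zinit) + c2 R * (\<kappa> * \<Lambda> (z0 \<kappa>) (\<zeta>0 \<kappa>) * exp (K * T)) / L) * exp (L * T)"
proof -
  have "\<kappa> * \<Lambda> (z0 \<kappa>) (\<zeta>0 \<kappa>) * exp (K * T) \<ge> 0"
    using \<open>\<kappa> \<ge> \<kappa>0\<close> kappa0_pos Lambda_nonneg by simp
  from slow_deviation[OF _ flow assms(2) L_pos lipschitz_grad_H0 R_pos fst_flow_bound this penalty_bound]
  show ?thesis using assms kappa0_pos flow_init by simp
qed

lemma tendsto_initial_penalty: "((\<lambda>\<kappa>. \<kappa> * \<Lambda> (z0 \<kappa>) (\<zeta>0 \<kappa>) * exp (K * T)) \<longlongrightarrow> 0) at_top"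
  by (rule tendsto_mult_left_zero[OF init_Lambda])

lemma deviation_le:
  assumes "\<kappa> \<ge> \<kappa>0" "ham_curve H0 sympJ zc" "zc 0 = zinit" "\<bar>t\<bar> \<le> T"
  shows "norm (fst (\<gamma> \<kappa> t) - zc t) + norm (snd (\<gamma> \<kappa> t))
    \<le> (norm (z0 \<kappa> - zinit) + c2 R * (\<kappa> * \<Lambda> (z0 \<kappa>) (\<zeta>0 \<kappa>) * exp (K * T)) / L) * exp (L * T)
      + ((E + c1) / (c0 * \<kappa>)) powr (1 / p)"
  using add_mono[OF fst_deviation_bound[OF assms] snd_flow_bound[OF assms(1)]] .

lemma tendsto_deviation_bound:
  "((\<lambda>\<kappa>. (norm (z0 \<kappa> - zinit) + c2 R * (\<kappa> * \<Lambda> (z0 \<kappa>) (\<zeta>0 \<kappa>) * exp (K * T)) / L) * exp (L * T)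
      + ((E + c1) / (c0 * \<kappa>)) powr (1 / p)) \<longlongrightarrow> 0) at_top"
proof -
  have "((\<lambda>\<kappa>. norm (z0 \<kappa> - zinit)) \<longlongrightarrow> 0) at_top"
    using tendsto_norm_zero[OF LIM_zero[OF init_conv]] .
  moreover have "((\<lambda>\<kappa>. ((E + c1) / (c0 * \<kappa>)) powr (1 / p)) \<longlongrightarrow> 0) at_top"
  proof (rule tendsto_zero_powrI[OF _ tendsto_const])
    show "((\<lambda>\<kappa>. (E + c1) / (c0 * \<kappa>)) \<longlongrightarrow> 0) at_top"
      using c0_pos by (intro tendsto_divide_0[OF tendsto_const] filterlim_at_top_imp_at_infinity
          filterlim_tendsto_pos_mult_at_top[OF tendsto_const _ filterlim_ident]) auto
    show "\<forall>\<^sub>F \<kappa> in at_top. 0 \<le> (E + c1) / (c0 * \<kappa>)"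
      using eventually_ge_at_top[of 0] by eventually_elim (use E_plus_c1_nonneg c0_pos in simp)
  qed (use p_pos in simp)
  ultimately show ?thesis
    using tendsto_add[OF tendsto_mult_left_zero[OF tendsto_add_zero[OF _
          tendsto_divide_zero[OF tendsto_mult_right_zero[OF tendsto_initial_penalty]]]]] by simp
qed

theorem tendsto_deviation:
  assumes "ham_curve H0 sympJ zc" "zc 0 = zinit" "T \<ge> 0"
  shows "((\<lambda>\<kappa>. SUP t\<in>{-T..T}. norm (fst (\<gamma> \<kappa> t) - zc t) + norm (snd (\<gamma> \<kappa> t))) \<longlongrightarrow> 0) at_top"
proof (rule tendsto_SUP_zero[OF _ _ tendsto_deviation_bound])
  show "{-T..T} \<noteq> {}" using \<open>T \<ge> 0\<close> by simp
qed (use eventually_ge_at_top[of \<kappa>0] in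
      \<open>eventually_elim, auto simp: abs_le_iff intro!: deviation_le[OF _ assms(1,2)]\<close>)

lemma penalty_nonneg: "\<kappa> \<ge> \<kappa>0 \<Longrightarrow> 0 \<le> \<kappa> * \<Lambda> z \<zeta>"
  using kappa0_pos Lambda_nonneg by simp

lemma energy_transfer_le:
  assumes "\<kappa> \<ge> \<kappa>0" "\<bar>t\<bar> \<le> T"
  shows "\<bar>H0 (fst (\<gamma> \<kappa> t)) - H0 (z0 \<kappa>)\<bar> + \<kappa> * \<Lambda> (fst (\<gamma> \<kappa> t)) (snd (\<gamma> \<kappa> t))
    \<le> \<kappa> * \<Lambda> (z0 \<kappa>) (\<zeta>0 \<kappa>) + 2 * (\<kappa> * \<Lambda> (z0 \<kappa>) (\<zeta>0 \<kappa>) * exp (K * T))"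
proof -
  have "H0 (fst (\<gamma> \<kappa> t)) + \<kappa> * \<Lambda> (fst (\<gamma> \<kappa> t)) (snd (\<gamma> \<kappa> t)) = H0 (z0 \<kappa>) + \<kappa> * \<Lambda> (z0 \<kappa>) (\<zeta>0 \<kappa>)"
    using flow_energy[OF flow[OF assms(1)], of t] flow_init[OF assms(1)] by (simp add: H_def)
  then show ?thesis
    using penalty_bound[OF assms] penalty_nonneg[OF assms(1)] by smt
qed

lemma tendsto_energy_transfer_bound:
  "((\<lambda>\<kappa>. \<kappa> * \<Lambda> (z0 \<kappa>) (\<zeta>0 \<kappa>) + 2 * (\<kappa> * \<Lambda> (z0 \<kappa>) (\<zeta>0 \<kappa>) * exp (K * T))) \<longlongrightarrow> 0) at_top"
  using tendsto_add_zero[OF init_Lambda tendsto_mult_right_zero[OF tendsto_initial_penalty]] .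

theorem tendsto_energy_transfer:
  assumes "T \<ge> 0"
  shows "((\<lambda>\<kappa>. SUP t\<in>{-T..T}. \<bar>H0 (fst (\<gamma> \<kappa> t)) - H0 (z0 \<kappa>)\<bar>
      + \<kappa> * \<Lambda> (fst (\<gamma> \<kappa> t)) (snd (\<gamma> \<kappa> t))) \<longlongrightarrow> 0) at_top"
proof (rule tendsto_SUP_zero[OF _ _ tendsto_energy_transfer_bound])
  show "{-T..T} \<noteq> {}" using \<open>T \<ge> 0\<close> by simp
qed (use eventually_ge_at_top[of \<kappa>0] in \<open>eventually_elim,
      auto simp: abs_le_iff intro!: energy_transfer_le add_nonneg_nonneg penalty_nonneg\<close>)

end

theorem lemma6p2:
  fixes H0 :: "(real^'n) \<times> (real^'n) \<Rightarrow> real"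
    and \<Lambda> :: "(real^'n) \<times> (real^'n) \<Rightarrow> (real^'m) \<times> (real^'m) \<Rightarrow> real"
    and c0 c1 p \<kappa>0 :: real
    and c2 :: "real \<Rightarrow> real"
    and z0 :: "real \<Rightarrow> (real^'n) \<times> (real^'n)"
    and \<zeta>0 :: "real \<Rightarrow> (real^'m) \<times> (real^'m)"
    and zinit :: "(real^'n) \<times> (real^'n)"
  assumes C11: "\<And>\<kappa>. \<kappa> > 0 \<Longrightarrow> C11 (\<lambda>w. H0 (fst w) + \<kappa> * \<Lambda> (fst w) (snd w))"
    and Lambda_nonneg: "\<And>z \<zeta>. \<Lambda> z \<zeta> \<ge> 0"
    and Lambda_zero: "\<And>z \<zeta>. \<Lambda> z \<zeta> = 0 \<longleftrightarrow> \<zeta> = 0"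
    and consts_pos: "c0 > 0" "c1 > 0" "p > 0"
    and coercive: "\<And>\<kappa> z \<zeta>. \<kappa> > 0 \<Longrightarrow>
        H0 z + \<kappa> * \<Lambda> z \<zeta> \<ge> c0 * (norm z powr p + \<kappa> * norm \<zeta> powr p) - c1"
    and c2_pos: "\<And>R. R > 0 \<Longrightarrow> c2 R > 0"
    and dLambda: "\<And>R z \<zeta> g. R > 0 \<Longrightarrow> norm z \<le> R \<Longrightarrow>
        ((\<lambda>z'. \<Lambda> z' \<zeta>) has_derivative (\<lambda>h. g \<bullet> h)) (at z) \<Longrightarrow>
        norm g \<le> c2 R * \<Lambda> z \<zeta>"
    and kappa0_pos: "\<kappa>0 > 0"
    and init_conv: "(z0 \<longlongrightarrow> zinit) at_top"
    and init_Lambda: "((\<lambda>\<kappa>. \<kappa> * \<Lambda> (z0 \<kappa>) (\<zeta>0 \<kappa>)) \<longlongrightarrow> 0) at_top"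
    and init_energy: "bdd_above ((\<lambda>\<kappa>. H0 (z0 \<kappa>) + \<kappa> * \<Lambda> (z0 \<kappa>) (\<zeta>0 \<kappa>)) ` {\<kappa>0..})"
  shows "\<exists>\<gamma> :: real \<Rightarrow> real \<Rightarrow> ((real^'n) \<times> (real^'n)) \<times> ((real^'m) \<times> (real^'m)).
     (\<forall>\<kappa>\<ge>\<kappa>0. ham_curve (\<lambda>w. H0 (fst w) + \<kappa> * \<Lambda> (fst w) (snd w)) sympJ2 (\<gamma> \<kappa>)
              \<and> \<gamma> \<kappa> 0 = (z0 \<kappa>, \<zeta>0 \<kappa>)) \<and>
     (\<exists>zc. ham_curve H0 sympJ zc \<and> zc 0 = zinit) \<and>
     (\<forall>zc. ham_curve H0 sympJ zc \<and> zc 0 = zinit \<longrightarrow>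
        (\<forall>T>0.
          ((\<lambda>\<kappa>. SUP t\<in>{-T..T}. norm (fst (\<gamma> \<kappa> t) - zc t) + norm (snd (\<gamma> \<kappa> t)))
              \<longlongrightarrow> 0) at_top \<and>
          ((\<lambda>\<kappa>. SUP t\<in>{-T..T}. \<bar>H0 (fst (\<gamma> \<kappa> t)) - H0 (z0 \<kappa>)\<bar>
                                 + \<kappa> * \<Lambda> (fst (\<gamma> \<kappa> t)) (snd (\<gamma> \<kappa> t)))
              \<longlongrightarrow> 0) at_top))"
proof -
  interpret penalized_hamiltonian H0 \<Lambda> c0 c1 p c2
    using assms by unfold_locales auto
  obtain \<gamma> where flows: "\<forall>\<kappa>>0. ham_curve (H \<kappa>) sympJ2 (\<gamma> \<kappa>) \<and> \<gamma> \<kappa> 0 = (z0 \<kappa>, \<zeta>0 \<kappa>)"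
    using flow_family_exists[of "\<lambda>\<kappa>. (z0 \<kappa>, \<zeta>0 \<kappa>)"] by blast
  interpret penalized_family H0 \<Lambda> c0 c1 p c2 \<kappa>0 z0 \<zeta>0 zinit \<gamma>
    using flows kappa0_pos init_conv init_Lambda init_energy by unfold_locales auto
  show ?thesis
  proof (rule exI[of _ \<gamma>], intro conjI)
    show "\<exists>zc. ham_curve H0 sympJ zc \<and> zc 0 = zinit"
      by (rule ham_curve_exists[OF C11_H0 lipschitz_on_sympJ])
  qed (use flows kappa0_pos tendsto_deviation tendsto_energy_transfer in
      \<open>simp_all add: H_def[abs_def] less_imp_le\<close>)
qed

end
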